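(* Let $p$ be an odd prime. Then \[ \sum_{j=0}^{p}E_j\equiv\frac32\pmod p . \]
   Context: The Euler polynomials are defined by $\sum_{n\ge0}E_n(x)\frac{t^n}{n!}=\frac{2}{e^t+1}e^{xt}$, and $E_n:=E_n(0)$ (so $E_0=1$, $E_1=-1/2$, $E_{2m}=0$ for $m\ge1$). For rationals whose denominators are coprime to $p$, $a\equiv b\pmod p$ means $a-b$ is $p$ times a rational with denominator coprime to $p$. *)

theory Defs
  imports "HOL-Computational_Algebra.Computational_Algebra"
begin

text \<open>Euler numbers E_n = E_n(0), defined through the exponential generating function
  sum_n E_n t^n/n! = 2/(e^t+1), as formal power series over the rationals.\<close>
definition euler_number :: "nat \<Rightarrow> rat" where
  "euler_number n = fact n * fps_nth (2 / (fps_exp 1 + 1)) n"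

definition rat_cong_mod :: "rat \<Rightarrow> rat \<Rightarrow> int \<Rightarrow> bool" where
  "rat_cong_mod a b p \<longleftrightarrow>
     (\<exists>r::rat. a - b = of_int p * r \<and> coprime (snd (quotient_of r)) p)"

end

theory Submission
  imports Defs "HOL-Number_Theory.Number_Theory"
begin

text \<open>Write A_n = \<Sum>x<p. (-1)^x x^n. Both E_n and A_n satisfy the binomial recurrence
  \<Sum>i\<le>n. (n choose i) a_i + a_n = c_n, with c_n = 2[n = 0] and c_n = 0^n + p^n respectively.
  These right-hand sides agree modulo p, and the recurrence determines 2 a_n from the a_i with
  i < n, so E_n \<equiv> A_n modulo p in \<int>[1/2]. Summing over n \<le> p and swapping the sums turns
  \<Sum>n\<le>p. A_n into an alternating sum of the geometric sums \<Sum>n\<le>p. x^n, which by Fermat are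
  \<equiv> x + 1 for x \<noteq> 1 and equal p + 1 for x = 1; hence 2 \<Sum>n\<le>p. A_n \<equiv> p + 3 \<equiv> 3.\<close>

lemma euler_number_recurrence:
  "(\<Sum>i\<le>n. of_nat (n choose i) * euler_number i) + euler_number n = (if n = 0 then 2 else 0)"
proof -
  define F where "F = 2 / (fps_exp (1::rat) + 1)"
  have "fps_exp 1 + 1 \<noteq> (0 :: rat fps)"
    by (auto dest: arg_cong[where f = "\<lambda>f. f $ 0"])
  then have "F * (fps_exp 1 + 1) = 2"
    unfolding F_def by (intro fps_times_divide_eq) auto
  then have "fact n * (F * (fps_exp 1 + 1)) $ n = fact n * (2::rat fps) $ n"
    by simp
  moreover have "fact n * F $ i / fact (n - i) = of_nat (n choose i) * euler_number i"
    if "i \<le> n" for i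
  proof -
    have "(fact n :: rat) = fact i * fact (n - i) * of_nat (n choose i)"
      using binomial_fact_lemma[OF that] by (metis of_nat_fact of_nat_mult)
    then show ?thesis
      by (simp add: euler_number_def F_def)
  qed
  ultimately show ?thesis
    by (simp add: fps_mult_nth distrib_left sum.distrib sum_distrib_left euler_number_def F_def
        fps_numeral_nth atLeast0AtMost)
qed

definition alternating_power_sum :: "nat \<Rightarrow> nat \<Rightarrow> int" where
  "alternating_power_sum p n = (\<Sum>x<p. (-1) ^ x * int x ^ n)"

lemma alternating_power_sum_recurrence:
  "(\<Sum>i\<le>n. int (n choose i) * alternating_power_sum p i) + alternating_power_sum p n =
    0 ^ n - (-1) ^ p * int p ^ n"
proof -
  define b where "b x = (-1) ^ x * int x ^ n" for x
  have "(\<Sum>i\<le>n. int (n choose i) * alternating_power_sum p i) = (\<Sum>x<p. (-1) ^ x * (int x + 1) ^ n)"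
    unfolding alternating_power_sum_def sum_distrib_left binomial_ring
    by (subst sum.swap) (simp add: sum_distrib_left mult_ac)
  then have "(\<Sum>i\<le>n. int (n choose i) * alternating_power_sum p i) + alternating_power_sum p n =
      (\<Sum>x<p. b x - b (Suc x))"
    unfolding alternating_power_sum_def b_def by (simp add: sum.distrib[symmetric] algebra_simps)
  also have "\<dots> = b 0 - b p"
    by (rule sum_lessThan_telescope')
  finally show ?thesis
    by (simp add: b_def)
qed

definition dyadic_multiples :: "int \<Rightarrow> rat set" where
  "dyadic_multiples q = {of_int (q * m) / 2 ^ k | m k. True}"

lemma dyadic_multiples_of_int: "of_int (q * m) \<in> dyadic_multiples q"
  unfolding dyadic_multiples_def by (metis (mono_tags) div_by_1 mem_Collect_eq power_0)

lemma dyadic_multiples_half: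
  assumes "x \<in> dyadic_multiples q"
  shows "x / 2 \<in> dyadic_multiples q"
proof -
  from assms obtain m k where "x = of_int (q * m) / 2 ^ k"
    unfolding dyadic_multiples_def by blast
  then have "x / 2 = of_int (q * m) / 2 ^ Suc k"
    by simp
  then show ?thesis
    unfolding dyadic_multiples_def by blast
qed

lemma dyadic_multiples_add:
  assumes "x \<in> dyadic_multiples q" and "y \<in> dyadic_multiples q"
  shows "x + y \<in> dyadic_multiples q"
proof -
  from assms obtain m k m' k' where x: "x = of_int (q * m) / 2 ^ k" and y: "y = of_int (q * m') / 2 ^ k'"
    unfolding dyadic_multiples_def by blast
  have "x + y = of_int (q * (m * 2 ^ k' + m' * 2 ^ k)) / 2 ^ (k + k')"
    unfolding x y by (simp add: field_simps power_add)
  then show ?thesis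
    unfolding dyadic_multiples_def by blast
qed

lemma dyadic_multiples_mult_Ints:
  assumes "a \<in> \<int>" and "x \<in> dyadic_multiples q"
  shows "a * x \<in> dyadic_multiples q"
proof -
  from assms obtain n m k where "a = of_int n" and "x = of_int (q * m) / 2 ^ k"
    unfolding dyadic_multiples_def Ints_def by blast
  then have "a * x = of_int (q * (n * m)) / 2 ^ k"
    by (simp add: field_simps)
  then show ?thesis
    unfolding dyadic_multiples_def by blast
qed

lemma dyadic_multiples_diff:
  assumes "x \<in> dyadic_multiples q" and "y \<in> dyadic_multiples q"
  shows "x - y \<in> dyadic_multiples q"
  using dyadic_multiples_add[OF assms(1) dyadic_multiples_mult_Ints[OF _ assms(2), of "-1"]]
  by simp

lemma dyadic_multiples_sum:
  "(\<And>i. i \<in> I \<Longrightarrow> f i \<in> dyadic_multiples q) \<Longrightarrow> sum f I \<in> dyadic_multiples q"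
  by (induction I rule: infinite_finite_induct)
    (auto intro: dyadic_multiples_add simp: dyadic_multiples_of_int[of q 0, simplified])

lemma binomial_recurrence_dyadic_multiples:
  assumes "\<And>n. (\<Sum>i\<le>n. of_nat (n choose i) * d i) + d n \<in> dyadic_multiples q"
  shows "d n \<in> dyadic_multiples q"
proof (induction n rule: less_induct)
  case (less n)
  have "(\<Sum>i\<le>n. of_nat (n choose i) * d i) = (\<Sum>i<n. of_nat (n choose i) * d i) + d n"
    by (simp add: lessThan_Suc_atMost[symmetric])
  then have "d n = ((\<Sum>i\<le>n. of_nat (n choose i) * d i) + d n - (\<Sum>i<n. of_nat (n choose i) * d i)) / 2"
    by simp
  also have "\<dots> \<in> dyadic_multiples q"
    using less by (intro dyadic_multiples_half dyadic_multiples_diff assms dyadic_multiples_sum)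
      (simp add: dyadic_multiples_mult_Ints)
  finally show ?case .
qed

lemma quotient_of_denom_dvd:
  assumes "b \<noteq> 0"
  shows "snd (quotient_of (of_int a / of_int b)) dvd b"
proof -
  obtain c d where cd: "quotient_of (of_int a / of_int b) = (c, d)"
    by fastforce
  have "of_int a / of_int b = (of_int c / of_int d :: rat)"
    using quotient_of_div[OF cd] .
  then have "a * d = c * b"
    using assms quotient_of_denom_pos[OF cd] by (simp add: field_simps flip: of_int_mult)
  then have "d dvd c * b"
    by (metis dvd_triv_right)
  moreover have "coprime d c"
    using quotient_of_coprime[OF cd] by (simp add: coprime_commute)
  ultimately show ?thesis
    using cd by (simp add: coprime_dvd_mult_right_iff)
qed

lemma rat_cong_mod_if_dyadic_multiple:
  assumes "odd q" and "a - b \<in> dyadic_multiples q"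
  shows "rat_cong_mod a b q"
proof -
  obtain m k where "a - b = of_int (q * m) / 2 ^ k"
    using assms(2) unfolding dyadic_multiples_def by blast
  then have "a - b = of_int q * (of_int m / of_int (2 ^ k))"
    by simp
  moreover have "coprime (snd (quotient_of (of_int m / of_int (2 ^ k)))) q"
    using assms(1) by (intro coprime_divisors[OF quotient_of_denom_dvd dvd_refl]) simp_all
  ultimately show ?thesis
    unfolding rat_cong_mod_def by blast
qed

lemma euler_number_minus_alternating_power_sum:
  assumes "odd p"
  shows "euler_number n - of_int (alternating_power_sum p n) \<in> dyadic_multiples (int p)"
proof (rule binomial_recurrence_dyadic_multiples)
  fix n
  have "(\<Sum>i\<le>n. of_nat (n choose i) * (euler_number i - of_int (alternating_power_sum p i))) +
      (euler_number n - of_int (alternating_power_sum p n)) =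
    ((\<Sum>i\<le>n. of_nat (n choose i) * euler_number i) + euler_number n) -
      of_int ((\<Sum>i\<le>n. int (n choose i) * alternating_power_sum p i) + alternating_power_sum p n)"
    by (simp add: right_diff_distrib sum_subtractf)
  also have "\<dots> = (if n = 0 then 2 else 0) - of_int (0 ^ n + int p ^ n)"
    using assms by (simp only: euler_number_recurrence alternating_power_sum_recurrence) simp
  also have "\<dots> = of_int (int p * (if n = 0 then 0 else - (int p ^ (n - 1))))"
    by (cases n) auto
  finally show "(\<Sum>i\<le>n. of_nat (n choose i) * (euler_number i - of_int (alternating_power_sum p i))) +
      (euler_number n - of_int (alternating_power_sum p n)) \<in> dyadic_multiples (int p)"
    by (simp only: dyadic_multiples_of_int)
qed

lemma fermat_little:
  fixes x p :: nat
  assumes "prime p"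
  shows "[x ^ p = x] (mod p)"
proof (cases "p dvd x")
  case True
  moreover have "p dvd x ^ p"
    using True assms by (meson dvd_power dvd_trans prime_gt_0_nat)
  ultimately show ?thesis
    by (metis cong_0_iff cong_sym cong_trans)
next
  case False
  have "[x * x ^ (p - 1) = x * 1] (mod p)"
    by (intro cong_mult cong_refl fermat_theorem assms False)
  then show ?thesis
    using assms by (simp add: power_eq_if[of x p] prime_gt_0_nat)
qed

lemma geometric_sum_cong:
  fixes x p :: nat
  assumes "prime p" and "\<not> [int x = 1] (mod int p)"
  shows "[(\<Sum>j\<le>p. int x ^ j) = int x + 1] (mod int p)"
proof -
  have "(int x - 1) * (\<Sum>j\<le>p. int x ^ j) = int x * int x ^ p - 1"
    using power_diff_1_eq[of "int x" "Suc p"] by (simp add: lessThan_Suc_atMost)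
  also have "[\<dots> = int x * int x - 1] (mod int p)"
    using fermat_little[OF assms(1), of x]
    by (intro cong_diff cong_mult cong_refl) (simp add: cong_int_iff flip: of_nat_power)
  also have "int x * int x - 1 = (int x - 1) * (int x + 1)"
    by (simp add: algebra_simps)
  finally have "[(int x - 1) * (\<Sum>j\<le>p. int x ^ j) = (int x - 1) * (int x + 1)] (mod int p)" .
  moreover have "coprime (int x - 1) (int p)"
    using assms by (intro prime_imp_coprime[THEN coprime_commute[THEN iffD1]])
      (simp_all add: cong_iff_dvd_diff)
  ultimately show ?thesis
    by (simp add: cong_mult_lcancel)
qed

lemma alternating_sum_succ_odd_length:
  "(\<Sum>x<Suc (2 * q). (-1) ^ x * (int x + 1)) = int q + 1"
  by (induction q) (auto simp: algebra_simps)

lemma sum_alternating_power_sum_cong: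
  assumes "prime p" and "odd p"
  shows "[2 * (\<Sum>j\<le>p. alternating_power_sum p j) = 3] (mod int p)"
proof -
  obtain q where q: "p = Suc (2 * q)"
    using assms(2) by (metis oddE Suc_eq_plus1)
  have p_gt_1: "1 < p"
    using assms(1) prime_gt_1_nat by blast
  have geometric: "[(\<Sum>j\<le>p. int x ^ j) = int x + 1 - of_bool (x = 1)] (mod int p)" if "x < p" for x
  proof (cases "x = 1")
    case True
    then show ?thesis
      by (simp add: cong_def)
  next
    case False
    have "\<not> [int x = 1] (mod int p)"
      using False that p_gt_1 cong_less_imp_eq_int[of "int x" "int p" 1] by auto
    then show ?thesis
      using geometric_sum_cong[OF assms(1)] False by simp
  qed
  have "(\<Sum>j\<le>p. alternating_power_sum p j) = (\<Sum>x<p. (-1) ^ x * (\<Sum>j\<le>p. int x ^ j))"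
    unfolding alternating_power_sum_def sum_distrib_left by (rule sum.swap)
  also have "[\<dots> = (\<Sum>x<p. (-1) ^ x * (int x + 1 - of_bool (x = 1)))] (mod int p)"
    by (intro cong_sum cong_mult cong_refl geometric) simp
  also have "(\<Sum>x<p. (-1) ^ x * (int x + 1 - of_bool (x = 1))) = (\<Sum>x<p. (-1) ^ x * (int x + 1)) + 1"
    using p_gt_1 by (simp add: right_diff_distrib sum_subtractf)
  also have "\<dots> = int q + 2"
    unfolding q alternating_sum_succ_odd_length by simp
  finally have "[2 * (\<Sum>j\<le>p. alternating_power_sum p j) = 2 * (int q + 2)] (mod int p)"
    by (rule cong_scalar_left)
  also have "2 * (int q + 2) = int p + 3"
    using q by simp
  also have "[int p + 3 = 3] (mod int p)"
    by (simp add: cong_def)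
  finally show ?thesis .
qed

theorem corollary4:
  fixes p :: nat
  assumes "prime p" and "odd p"
  shows "rat_cong_mod (\<Sum>j=0..p. euler_number j) (3/2) (int p)"
proof -
  let ?A = "alternating_power_sum p"
  obtain m where m: "2 * (\<Sum>j\<le>p. ?A j) - 3 = int p * m"
    using sum_alternating_power_sum_cong[OF assms] by (metis cong_iff_dvd_diff dvdE)
  have "(\<Sum>j=0..p. euler_number j) - 3 / 2 =
      (\<Sum>j\<le>p. euler_number j - of_int (?A j)) + of_int (int p * m) / 2"
    unfolding m[symmetric] by (simp add: atLeast0AtMost sum_subtractf field_simps)
  also have "\<dots> \<in> dyadic_multiples (int p)"
    using assms(2) by (intro dyadic_multiples_add dyadic_multiples_sum dyadic_multiples_half
        dyadic_multiples_of_int euler_number_minus_alternating_power_sum)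
  finally show ?thesis
    using assms(2) by (intro rat_cong_mod_if_dyadic_multiple) simp_all
qed

end
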